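(* Let $f_1,f_2,f_3,f_4$ be strongly hyperbolic functions with $f_1(1)=f_3(1)=1$. The plane $\mathcal{M}(f_1,f_2;f_3,f_4)$ is isomorphic to the classical flat Minkowski plane if and only if $f_i(x)=1/x$ for $i=1,2,3,4$.
   Context: Identify $\mathbb{S}^1$ with $\mathbb{R}\cup\{\infty\}$, $\mathcal{P}=\mathbb{S}^1\times\mathbb{S}^1$, $\mathbb{R}^+=(0,\infty)$. A function $f:\mathbb{R}^+\to\mathbb{R}^+$ is strongly hyperbolic if: (1) $\lim_{x\to0+}f(x)=+\infty$, $\lim_{x\to+\infty}f(x)=0$; (2) $f$ strictly convex; (3) $\lim_{x\to+\infty}f(x+b)/f(x)=1$ for each $b\in\mathbb{R}$; (4) $f$ differentiable; (5) $\ln|f'|$ strictly convex. For strongly hyperbolic $f_1,f_2$, $a>0$, $b,c\in\mathbb{R}$: $f_{a,b,c}(x)=af_1(x+b)+c$ for $x>-b$, $f_{a,b,c}(x)=-af_2(-x-b)+c$ for $x<-b$; $\overline{f_{a,b,c}}=\{(x,f_{a,b,c}(x)):x\ne-b\}\cup\{(-b,\infty),(\infty,c)\}$; $\overline{l_{s,t}}=\{(x,sx+t):x\in\mathbb{R}\}\cup\{(\infty,\infty)\}$; $\mathcal{C}^-(f_1,f_2)=\{\overline{f_{a,b,c}}:a>0,b,c\in\mathbb{R}\}\cup\{\overline{l_{s,t}}:s<0\}$; $\mathcal{C}^+(f_1,f_2)=\varphi(\mathcal{C}^-(f_1,f_2))$ with $\varphi(x,y)=(-x,y)$, $-\infty=\infty$.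 The plane $\mathcal{M}(f_1,f_2;f_3,f_4)$ has point set $\mathcal{P}$ and circle set $\mathcal{C}^-(f_1,f_2)\cup\mathcal{C}^+(f_3,f_4)$. The classical flat Minkowski plane has point set $\mathcal{P}$ and circles the sets $\{(x,sx+t):x\in\mathbb{R}\}\cup\{(\infty,\infty)\}$ ($s\ne0$, $t\in\mathbb{R}$) and $\{(x,y)\in\mathbb{R}^2:(x-b)(y-c)=a\}\cup\{(\infty,c),(b,\infty)\}$ ($a\ne0$, $b,c\in\mathbb{R}$). An isomorphism between two such planes is a bijection of point sets mapping circles onto circles and inducing a bijection of the circle sets. *)

theory Defs
  imports "HOL-Analysis.Analysis"
begin

text \<open>The circle S^1 identified with R extended by a single point at infinity.\<close>
datatype ext = Fin real | Infty

type_synonym point = "ext \<times> ext"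

definition strictly_convex_on :: "real set \<Rightarrow> (real \<Rightarrow> real) \<Rightarrow> bool" where
  "strictly_convex_on S f \<longleftrightarrow>
     (\<forall>x\<in>S. \<forall>y\<in>S. \<forall>t. x \<noteq> y \<and> 0 < t \<and> t < 1 \<longrightarrow>
        f ((1 - t) * x + t * y) < (1 - t) * f x + t * f y)"

text \<open>Strongly hyperbolic functions R+ -> R+ (only values on (0,inf) matter).\<close>
definition strongly_hyperbolic :: "(real \<Rightarrow> real) \<Rightarrow> bool" where
  "strongly_hyperbolic f \<longleftrightarrow>
     (\<forall>x>0. f x > 0) \<and>
     filterlim f at_top (at_right 0) \<and>
     (f \<longlongrightarrow> 0) at_top \<and>
     strictly_convex_on {0<..} f \<and>
     (\<forall>b. ((\<lambda>x. f (x + b) / f x) \<longlongrightarrow> 1) at_top) \<and>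
     (\<forall>x>0. f differentiable (at x)) \<and>
     strictly_convex_on {0<..} (\<lambda>x. ln \<bar>deriv f x\<bar>)"

definition fabc :: "(real \<Rightarrow> real) \<Rightarrow> (real \<Rightarrow> real) \<Rightarrow> real \<Rightarrow> real \<Rightarrow> real \<Rightarrow> real \<Rightarrow> real" where
  "fabc f1 f2 a b c x = (if x > - b then a * f1 (x + b) + c else - a * f2 (- x - b) + c)"

definition fabc_circle :: "(real \<Rightarrow> real) \<Rightarrow> (real \<Rightarrow> real) \<Rightarrow> real \<Rightarrow> real \<Rightarrow> real \<Rightarrow> point set" where
  "fabc_circle f1 f2 a b c =
     {(Fin x, Fin (fabc f1 f2 a b c x)) | x. x \<noteq> - b} \<union> {(Fin (- b), Infty), (Infty, Fin c)}"

definition line_circle :: "real \<Rightarrow> real \<Rightarrow> point set" where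
  "line_circle s t = {(Fin x, Fin (s * x + t)) | x. True} \<union> {(Infty, Infty)}"

definition Cminus :: "(real \<Rightarrow> real) \<Rightarrow> (real \<Rightarrow> real) \<Rightarrow> point set set" where
  "Cminus f1 f2 = {fabc_circle f1 f2 a b c | a b c. a > 0}
                  \<union> {line_circle s t | s t. s < 0}"

fun ext_neg :: "ext \<Rightarrow> ext" where
  "ext_neg (Fin x) = Fin (- x)"
| "ext_neg Infty = Infty"

definition refl_x :: "point \<Rightarrow> point" where
  "refl_x p = (ext_neg (fst p), snd p)"

definition Cplus :: "(real \<Rightarrow> real) \<Rightarrow> (real \<Rightarrow> real) \<Rightarrow> point set set" where
  "Cplus f1 f2 = (\<lambda>C. refl_x ` C) ` Cminus f1 f2"

text \<open>Circle set of the plane M(f1,f2;f3,f4); its point set is UNIV :: point set.\<close>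
definition M_circles :: "(real \<Rightarrow> real) \<Rightarrow> (real \<Rightarrow> real) \<Rightarrow> (real \<Rightarrow> real) \<Rightarrow> (real \<Rightarrow> real) \<Rightarrow> point set set" where
  "M_circles f1 f2 f3 f4 = Cminus f1 f2 \<union> Cplus f3 f4"

text \<open>Circle set of the classical flat Minkowski plane; point set UNIV.\<close>
definition classical_circles :: "point set set" where
  "classical_circles =
     {line_circle s t | s t. s \<noteq> 0}
     \<union> {{(Fin x, Fin y) | x y. (x - b) * (y - c) = a} \<union> {(Infty, Fin c), (Fin b, Infty)}
         | a b c. a \<noteq> 0}"

definition plane_iso :: "(point \<Rightarrow> point) \<Rightarrow> point set set \<Rightarrow> point set set \<Rightarrow> bool" where
  "plane_iso g C1 C2 \<longleftrightarrow> bij g \<and> bij_betw (\<lambda>C. g ` C) C1 C2"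

end

(* In both planes two points lie on a common circle if and only if they are not
   parallel (they differ in both coordinates), so an isomorphism g preserves parallelism and is
   therefore a product map \<sigma> \<times> \<tau>, possibly followed by the swap of coordinates.  Every classical
   circle is the graph of a Moebius transformation of the extended line, hence every circle of
   M(f1, f2; f3, f4), read as the graph of a map h, satisfies \<tau> \<circ> h = m \<circ> \<sigma> with m Moebius.
   The circles of M include the graphs of all affine maps of nonzero slope, so \<sigma> conjugates
   affine maps to Moebius maps; normalising \<sigma> \<infinity> = \<infinity>, it conjugates affine maps of the reals to
   affine maps, which makes it affine because the only ring endomorphism of the reals is the
   identity.  Thus \<sigma>, \<tau> and every circle of M are Moebius.  The circle through (\<infinity>, 0), (0, \<infinity>)
   and (1, 1) is the graph of x \<mapsto> f1 x for x > 0 and x \<mapsto> - f2 (- x) for x < 0, and the only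
   Moebius map with these values at \<infinity>, 0 and 1 is x \<mapsto> 1 / x; likewise for f3, f4.  Conversely,
   for f = 1 / x the circles of M are exactly the classical circles. *)

theory Submission
  imports Defs
begin


section \<open>Ring endomorphisms of the reals\<close>

lemma additive_of_int_mult:
  fixes \<phi> :: "real \<Rightarrow> real"
  assumes add: "\<And>x y. \<phi> (x + y) = \<phi> x + \<phi> y"
  shows "\<phi> (of_int m * x) = of_int m * \<phi> x"
proof -
  have zero: "\<phi> 0 = 0" using add[of 0 0] by simp
  have nat: "\<phi> (of_nat n * x) = of_nat n * \<phi> x" for n
    by (induction n) (simp_all add: zero add distrib_right)
  show ?thesis
  proof (cases "m \<ge> 0")
    case True
    then show ?thesis using nat[of "nat m"] by simp
  next
    case False
    have "of_int m * x + of_nat (nat (- m)) * x = 0" using False by (simp add: algebra_simps)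
    then have "\<phi> (of_int m * x) + \<phi> (of_nat (nat (- m)) * x) = 0" using add zero by metis
    then show ?thesis using nat[of "nat (- m)"] False by simp
  qed
qed

lemma additive_fixes_Rats:
  fixes \<phi> :: "real \<Rightarrow> real"
  assumes add: "\<And>x y. \<phi> (x + y) = \<phi> x + \<phi> y" and "\<phi> 1 = 1" "q \<in> \<rat>"
  shows "\<phi> q = q"
proof -
  obtain m :: int and n :: nat where q: "q = of_int m / of_nat n" and n: "n \<noteq> 0"
    using \<open>q \<in> \<rat>\<close> unfolding Rats_eq_int_div_nat by blast
  have "of_int n * \<phi> q = \<phi> (of_int m)"
    using additive_of_int_mult[of \<phi> n q, OF add] q n by simp
  also have "\<dots> = of_int m"
    using additive_of_int_mult[of \<phi> m 1, OF add] \<open>\<phi> 1 = 1\<close> by simp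
  also have "\<dots> = of_int n * q" using q n by simp
  finally show ?thesis using n by simp
qed

lemma additive_mono_eq_id:
  fixes \<phi> :: "real \<Rightarrow> real"
  assumes add: "\<And>x y. \<phi> (x + y) = \<phi> x + \<phi> y" and "mono \<phi>" "\<phi> 1 = 1"
  shows "\<phi> x = x"
proof (rule ccontr)
  have fix_Rats: "\<phi> q = q" if "q \<in> \<rat>" for q
    using additive_fixes_Rats[of \<phi>, OF add \<open>\<phi> 1 = 1\<close> that] .
  assume "\<phi> x \<noteq> x"
  then consider "\<phi> x < x" | "x < \<phi> x" by linarith
  then show False
  proof cases
    case 1
    then obtain q where "q \<in> \<rat>" "\<phi> x < q" "q < x" using Rats_dense_in_real by blast
    with fix_Rats show False by (metis \<open>mono \<phi>\<close> less_le_not_le monoD)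
  next
    case 2
    then obtain q where "q \<in> \<rat>" "x < q" "q < \<phi> x" using Rats_dense_in_real by blast
    with fix_Rats show False by (metis \<open>mono \<phi>\<close> less_le_not_le monoD)
  qed
qed

text \<open>A ring endomorphism of the reals is monotone, since it maps squares to squares.\<close>

lemma real_ring_endomorphism_eq_id:
  fixes \<phi> :: "real \<Rightarrow> real"
  assumes add: "\<And>x y. \<phi> (x + y) = \<phi> x + \<phi> y"
    and mult: "\<And>x y. \<phi> (x * y) = \<phi> x * \<phi> y"
    and "\<phi> 1 = 1"
  shows "\<phi> x = x"
proof (rule additive_mono_eq_id[of \<phi>, OF add])
  have "\<phi> x \<le> \<phi> y" if "x \<le> y" for x y
  proof -
    have "\<phi> (y - x) = \<phi> (sqrt (y - x)) * \<phi> (sqrt (y - x))"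
      using that mult[of "sqrt (y - x)" "sqrt (y - x)"] by simp
    moreover have "\<phi> y = \<phi> x + \<phi> (y - x)" using add[of x "y - x"] by simp
    ultimately show ?thesis by simp
  qed
  then show "mono \<phi>" by (rule monoI)
qed fact

lemma affine_conjugating_bij_eq_id:
  fixes \<phi> :: "real \<Rightarrow> real"
  assumes "bij \<phi>" "\<phi> 0 = 0" "\<phi> 1 = 1"
    and conj: "\<And>s t. s \<noteq> 0 \<Longrightarrow> \<exists>a c. \<forall>x. \<phi> (s * x + t) = a * \<phi> x + c"
  shows "\<phi> x = x"
proof (rule real_ring_endomorphism_eq_id)
  show "\<phi> (x + t) = \<phi> x + \<phi> t" for x t
  proof -
    obtain a c where "\<forall>x. \<phi> (1 * x + t) = a * \<phi> x + c" using conj[OF one_neq_zero, of t] by blast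
    then have ac: "\<phi> (x + t) = a * \<phi> x + c" for x by simp
    have "a = 1" if "t \<noteq> 0"
    proof (rule ccontr)
      assume "a \<noteq> 1"
      text \<open>Then the conjugate \<open>u \<mapsto> a * u + c\<close> of the translation by \<open>t\<close> has a fixed point.\<close>
      obtain x0 where x0: "\<phi> x0 = c / (1 - a)" using \<open>bij \<phi>\<close> by (metis bij_pointE)
      have "a * (c / (1 - a)) + c = c / (1 - a)" using \<open>a \<noteq> 1\<close> by (simp add: field_simps)
      then have "\<phi> (x0 + t) = \<phi> x0" using ac[of x0] x0 by simp
      then show False using \<open>t \<noteq> 0\<close> \<open>bij \<phi>\<close> by (simp add: bij_def inj_eq)
    qed
    moreover have "c = \<phi> t" using ac[of 0] \<open>\<phi> 0 = 0\<close> by simp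
    ultimately show ?thesis using ac[of x] \<open>\<phi> 0 = 0\<close> by (cases "t = 0") (simp_all add: add.commute)
  qed
  show "\<phi> (s * x) = \<phi> s * \<phi> x" for s x
  proof (cases "s = 0")
    case False
    then obtain a c where "\<forall>x. \<phi> (s * x + 0) = a * \<phi> x + c" using conj by blast
    then have ac: "\<phi> (s * x) = a * \<phi> x + c" for x by simp
    have "c = 0" using ac[of 0] \<open>\<phi> 0 = 0\<close> by simp
    moreover have "a = \<phi> s" using ac[of 1] \<open>\<phi> 1 = 1\<close> \<open>c = 0\<close> by simp
    ultimately show ?thesis using ac[of x] by simp
  qed (simp add: \<open>\<phi> 0 = 0\<close>)
qed fact

lemma affine_conjugating_bij_affine:
  fixes \<psi> :: "real \<Rightarrow> real"
  assumes "bij \<psi>"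
    and conj: "\<And>s t. s \<noteq> 0 \<Longrightarrow> \<exists>a c. \<forall>x. \<psi> (s * x + t) = a * \<psi> x + c"
  shows "\<exists>a c. a \<noteq> 0 \<and> (\<forall>x. \<psi> x = a * x + c)"
proof -
  define k where "k = \<psi> 1 - \<psi> 0"
  have "k \<noteq> 0" using \<open>bij \<psi>\<close> unfolding k_def by (simp add: bij_def inj_eq)
  define \<phi> where "\<phi> x = (\<psi> x - \<psi> 0) / k" for x
  have "\<phi> = (\<lambda>y. (y - \<psi> 0) / k) \<circ> \<psi>" by (simp add: \<phi>_def fun_eq_iff)
  moreover have "bij (\<lambda>y. (y - \<psi> 0) / k)"
    using \<open>k \<noteq> 0\<close> by (intro o_bij[of "\<lambda>y. k * y + \<psi> 0"]) (auto simp: fun_eq_iff)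
  ultimately have "bij \<phi>" using \<open>bij \<psi>\<close> by (simp add: bij_comp)
  moreover have "\<phi> 0 = 0" "\<phi> 1 = 1" using \<open>k \<noteq> 0\<close> by (simp_all add: \<phi>_def k_def)
  moreover have "\<exists>a c. \<forall>x. \<phi> (s * x + t) = a * \<phi> x + c" if s: "s \<noteq> 0" for s t
  proof -
    obtain a c where ac: "\<forall>x. \<psi> (s * x + t) = a * \<psi> x + c" using conj[OF s] by blast
    have "\<phi> (s * x + t) = a * \<phi> x + (a * \<psi> 0 + c - \<psi> 0) / k" for x
      using ac[rule_format, of x] \<open>k \<noteq> 0\<close> by (simp add: \<phi>_def field_simps)
    then show ?thesis by blast
  qed
  ultimately have "\<phi> x = x" for x by (rule affine_conjugating_bij_eq_id)
  then have "\<psi> x = k * x + \<psi> 0" for x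
    using \<open>k \<noteq> 0\<close> unfolding \<phi>_def by (metis nonzero_eq_divide_eq diff_eq_eq mult.commute)
  with \<open>k \<noteq> 0\<close> show ?thesis by blast
qed

section \<open>Moebius transformations of the extended real line\<close>

definition mobius :: "real \<Rightarrow> real \<Rightarrow> real \<Rightarrow> real \<Rightarrow> ext \<Rightarrow> ext" where
  "mobius p q r s u =
     (case u of
        Fin x \<Rightarrow> if r * x + s = 0 then Infty else Fin ((p * x + q) / (r * x + s))
      | Infty \<Rightarrow> if r = 0 then Infty else Fin (p / r))"

definition is_mobius :: "(ext \<Rightarrow> ext) \<Rightarrow> bool" where
  "is_mobius h \<longleftrightarrow> (\<exists>p q r s. p * s - q * r \<noteq> 0 \<and> h = mobius p q r s)"

lemma mobius_Fin:
  "mobius p q r s (Fin x) = (if r * x + s = 0 then Infty else Fin ((p * x + q) / (r * x + s)))"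
  by (simp add: mobius_def)

lemma mobius_Infty: "mobius p q r s Infty = (if r = 0 then Infty else Fin (p / r))"
  by (simp add: mobius_def)

lemma ext_fun_eqI:
  assumes "\<And>x. f (Fin x) = g (Fin x)" "f Infty = g Infty"
  shows "f = g"
proof
  fix u show "f u = g u" using assms by (cases u) simp_all
qed

lemma is_mobiusI: "p * s - q * r \<noteq> 0 \<Longrightarrow> is_mobius (mobius p q r s)"
  unfolding is_mobius_def by blast

lemma mobius_scalar: "d \<noteq> 0 \<Longrightarrow> mobius d 0 0 d = id"
  by (auto simp: mobius_def split: ext.split)

lemma mobius_mobius:
  assumes "p' * s' - q' * r' \<noteq> 0"
  shows "mobius p q r s (mobius p' q' r' s' u) =
         mobius (p * p' + q * r') (p * q' + q * s') (r * p' + s * r') (r * q' + s * s') u"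
proof (cases u)
  case (Fin x)
  show ?thesis
  proof (cases "r' * x + s' = 0")
    case True
    then have s': "s' = - r' * x" by linarith
    have "p' * x + q' \<noteq> 0"
    proof
      assume "p' * x + q' = 0"
      then have "q' = - p' * x" by linarith
      with s' assms show False by simp
    qed
    moreover have "(r * p' + s * r') * x + (r * q' + s * s') = r * (p' * x + q')"
      and "(p * p' + q * r') * x + (p * q' + q * s') = p * (p' * x + q')"
      using s' by (simp_all add: algebra_simps)
    ultimately show ?thesis using Fin True by (simp add: mobius_Fin mobius_Infty)
  next
    case False
    let ?y = "(p' * x + q') / (r' * x + s')"
    have "r * ?y + s = ((r * p' + s * r') * x + (r * q' + s * s')) / (r' * x + s')"
      and "p * ?y + q = ((p * p' + q * r') * x + (p * q' + q * s')) / (r' * x + s')"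
      using False by (simp_all add: field_simps)
    with Fin False show ?thesis by (simp add: mobius_Fin)
  qed
next
  case Infty
  show ?thesis
  proof (cases "r' = 0")
    case True
    then have "p' \<noteq> 0" "s' \<noteq> 0" using assms by auto
    with Infty True show ?thesis by (simp add: mobius_Infty)
  next
    case False
    have "r * (p' / r') + s = (r * p' + s * r') / r'" and "p * (p' / r') + q = (p * p' + q * r') / r'"
      using False by (simp_all add: field_simps)
    with Infty False show ?thesis by (simp add: mobius_Fin mobius_Infty)
  qed
qed

lemma is_mobius_comp:
  assumes "is_mobius h" "is_mobius k"
  shows "is_mobius (h \<circ> k)"
proof -
  obtain p q r s p' q' r' s' where d: "p * s - q * r \<noteq> 0" "p' * s' - q' * r' \<noteq> 0"
    and hk: "h = mobius p q r s" "k = mobius p' q' r' s'"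
    using assms unfolding is_mobius_def by blast
  have "(p * p' + q * r') * (r * q' + s * s') - (p * q' + q * s') * (r * p' + s * r')
      = (p * s - q * r) * (p' * s' - q' * r')"
    by (simp add: algebra_simps)
  with d have "is_mobius (mobius (p * p' + q * r') (p * q' + q * s') (r * p' + s * r') (r * q' + s * s'))"
    by (intro is_mobiusI) simp
  moreover have "h \<circ> k = mobius (p * p' + q * r') (p * q' + q * s') (r * p' + s * r') (r * q' + s * s')"
    using mobius_mobius[OF d(2)] hk by auto
  ultimately show ?thesis by simp
qed

lemma is_mobius_inverse:
  assumes "is_mobius h"
  obtains k where "is_mobius k" "k \<circ> h = id" "h \<circ> k = id"
proof -
  obtain p q r s where d: "p * s - q * r \<noteq> 0" and h: "h = mobius p q r s"
    using assms unfolding is_mobius_def by blast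
  have d': "s * p - (- q) * (- r) \<noteq> 0" using d by (simp add: algebra_simps)
  have "mobius s (- q) (- r) p \<circ> h = mobius (p * s - q * r) 0 0 (p * s - q * r)"
    and "h \<circ> mobius s (- q) (- r) p = mobius (p * s - q * r) 0 0 (p * s - q * r)"
    using mobius_mobius[OF d] mobius_mobius[OF d'] h by (auto simp: algebra_simps)
  with d d' show ?thesis
    by (intro that[of "mobius s (- q) (- r) p"] is_mobiusI) (simp_all add: mobius_scalar)
qed

lemma is_mobius_bij: "is_mobius h \<Longrightarrow> bij h"
  by (metis is_mobius_inverse o_bij)

lemma is_mobius_inv: "is_mobius h \<Longrightarrow> is_mobius (inv h)"
  by (metis is_mobius_inverse inv_unique_comp)

lemma is_mobius_comp_cancel: "is_mobius m \<Longrightarrow> m \<circ> f = k \<Longrightarrow> f = inv m \<circ> k"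
  by (auto simp: o_assoc is_mobius_bij bij_is_inj)

lemma mobius_affine_Fin [simp]: "mobius s t 0 1 (Fin x) = Fin (s * x + t)"
  and mobius_affine_Infty [simp]: "mobius s t 0 1 Infty = Infty"
  by (simp_all add: mobius_Fin mobius_Infty)

lemma is_mobius_affine: "s \<noteq> 0 \<Longrightarrow> is_mobius (mobius s t 0 1)"
  by (rule is_mobiusI) simp

lemma is_mobius_fixing_Infty_affine:
  assumes "is_mobius h" "h Infty = Infty"
  shows "\<exists>a c. a \<noteq> 0 \<and> h = mobius a c 0 1"
proof -
  obtain p q r s where d: "p * s - q * r \<noteq> 0" and h: "h = mobius p q r s"
    using assms(1) unfolding is_mobius_def by blast
  have "r = 0" using assms(2) h by (simp add: mobius_Infty split: if_splits)
  with d have "p \<noteq> 0" "s \<noteq> 0" by auto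
  have "h = mobius (p / s) (q / s) 0 1"
    using h \<open>r = 0\<close> \<open>s \<noteq> 0\<close> by (intro ext_fun_eqI) (simp_all add: mobius_Fin mobius_Infty add_divide_distrib)
  with \<open>p \<noteq> 0\<close> \<open>s \<noteq> 0\<close> show ?thesis by (intro exI[of _ "p / s"] exI[of _ "q / s"]) simp
qed

lemma exists_mobius_to_Infty: "\<exists>\<nu>. is_mobius \<nu> \<and> \<nu> w = Infty"
proof (cases w)
  case (Fin x)
  then have "mobius 0 1 1 (- x) w = Infty" by (simp add: mobius_Fin)
  then show ?thesis by (intro exI[of _ "mobius 0 1 1 (- x)"]) (simp add: is_mobiusI)
next
  case Infty
  then show ?thesis by (intro exI[of _ "mobius 1 0 0 1"]) (simp add: is_mobius_affine)
qed

lemma bij_fixing_Infty_restrict: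
  assumes "bij \<psi>" "\<psi> Infty = Infty"
  obtains \<psi>\<^sub>0 where "bij \<psi>\<^sub>0" "\<And>x. \<psi> (Fin x) = Fin (\<psi>\<^sub>0 x)"
proof -
  have "\<exists>y. \<psi> (Fin x) = Fin y" for x
    using assms by (metis bij_is_inj ext.distinct(1) inj_eq ext.exhaust)
  then obtain \<psi>\<^sub>0 where \<psi>\<^sub>0: "\<And>x. \<psi> (Fin x) = Fin (\<psi>\<^sub>0 x)" by metis
  have "inj \<psi>\<^sub>0" using \<open>bij \<psi>\<close> \<psi>\<^sub>0 by (metis bij_is_inj ext.inject injD injI)
  moreover have "surj \<psi>\<^sub>0" unfolding surj_def
  proof
    fix y
    obtain u where u: "\<psi> u = Fin y" using \<open>bij \<psi>\<close> by (metis bij_pointE)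
    with \<open>\<psi> Infty = Infty\<close> obtain x where "u = Fin x" by (cases u) auto
    with u \<psi>\<^sub>0 show "\<exists>x. y = \<psi>\<^sub>0 x" by auto
  qed
  ultimately show thesis using that \<psi>\<^sub>0 by (simp add: bij_def)
qed

lemma affine_conjugating_bij_fixing_Infty_affine:
  assumes "bij \<psi>" "\<psi> Infty = Infty"
    and conj: "\<And>s t. s \<noteq> 0 \<Longrightarrow> \<exists>m. is_mobius m \<and> \<psi> \<circ> mobius s t 0 1 = m \<circ> \<psi>"
  shows "\<exists>a c. a \<noteq> 0 \<and> \<psi> = mobius a c 0 1"
proof -
  obtain \<psi>\<^sub>0 where "bij \<psi>\<^sub>0" and \<psi>\<^sub>0: "\<And>x. \<psi> (Fin x) = Fin (\<psi>\<^sub>0 x)"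
    using bij_fixing_Infty_restrict[OF assms(1,2)] by blast
  have "\<exists>a c. \<forall>x. \<psi>\<^sub>0 (s * x + t) = a * \<psi>\<^sub>0 x + c" if "s \<noteq> 0" for s t
  proof -
    obtain m where "is_mobius m" and m: "\<psi> \<circ> mobius s t 0 1 = m \<circ> \<psi>" using conj[OF \<open>s \<noteq> 0\<close>] by blast
    moreover from m have "m Infty = Infty" using \<open>\<psi> Infty = Infty\<close> by (metis comp_apply mobius_affine_Infty)
    ultimately obtain a c where "m = mobius a c 0 1" using is_mobius_fixing_Infty_affine by blast
    with m have "\<psi>\<^sub>0 (s * x + t) = a * \<psi>\<^sub>0 x + c" for x
      using \<psi>\<^sub>0 by (metis comp_apply ext.inject mobius_affine_Fin)
    then show ?thesis by blast
  qed
  with \<open>bij \<psi>\<^sub>0\<close> obtain a c where "a \<noteq> 0" "\<And>x. \<psi>\<^sub>0 x = a * x + c"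
    using affine_conjugating_bij_affine by blast
  moreover from this have "\<psi> = mobius a c 0 1"
    using \<psi>\<^sub>0 \<open>\<psi> Infty = Infty\<close> by (intro ext_fun_eqI) simp_all
  ultimately show ?thesis by blast
qed

text \<open>Normalising by a Moebius map that sends \<open>\<sigma> \<infinity>\<close> to \<open>\<infinity>\<close> reduces this to the real case.\<close>

lemma affine_conjugating_bij_mobius:
  assumes "bij \<sigma>"
    and conj: "\<And>s t. s \<noteq> 0 \<Longrightarrow> \<exists>m. is_mobius m \<and> \<sigma> \<circ> mobius s t 0 1 = m \<circ> \<sigma>"
  shows "is_mobius \<sigma>"
proof -
  obtain \<nu> where \<nu>: "is_mobius \<nu>" "\<nu> (\<sigma> Infty) = Infty" using exists_mobius_to_Infty by blast
  have "\<exists>m. is_mobius m \<and> (\<nu> \<circ> \<sigma>) \<circ> mobius s t 0 1 = m \<circ> (\<nu> \<circ> \<sigma>)" if s: "s \<noteq> 0" for s t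
  proof -
    obtain m where "is_mobius m" "\<sigma> \<circ> mobius s t 0 1 = m \<circ> \<sigma>" using conj[OF s] by blast
    then have "is_mobius (\<nu> \<circ> m \<circ> inv \<nu>)" "(\<nu> \<circ> \<sigma>) \<circ> mobius s t 0 1 = (\<nu> \<circ> m \<circ> inv \<nu>) \<circ> (\<nu> \<circ> \<sigma>)"
      using \<nu>(1) by (simp_all add: is_mobius_comp is_mobius_inv fun_eq_iff is_mobius_bij bij_is_inj)
    then show ?thesis by blast
  qed
  with \<nu> \<open>bij \<sigma>\<close> obtain a c where "a \<noteq> 0" and \<nu>\<sigma>: "\<nu> \<circ> \<sigma> = mobius a c 0 1"
    using affine_conjugating_bij_fixing_Infty_affine[of "\<nu> \<circ> \<sigma>"] by (auto simp: bij_comp is_mobius_bij)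
  from \<nu>\<sigma> have "\<sigma> = inv \<nu> \<circ> mobius a c 0 1" by (rule is_mobius_comp_cancel[OF \<nu>(1)])
  with \<nu>(1) \<open>a \<noteq> 0\<close> show ?thesis by (simp add: is_mobius_comp is_mobius_inv is_mobius_affine)
qed

lemma conjugate_mobius_imp_mobius:
  assumes "bij \<alpha>"
    and conj: "\<And>h. h \<in> G \<Longrightarrow> \<exists>m. is_mobius m \<and> \<beta> \<circ> h = m \<circ> \<alpha>"
    and affine: "\<And>s t. s \<noteq> 0 \<Longrightarrow> mobius s t 0 1 \<in> G"
    and "h \<in> G"
  shows "is_mobius h"
proof -
  obtain m\<^sub>0 where m\<^sub>0: "is_mobius m\<^sub>0" "\<beta> = m\<^sub>0 \<circ> \<alpha>"
    using conj[OF affine[OF one_neq_zero, of 0]] by (auto simp: mobius_scalar)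
  have "is_mobius \<alpha>"
  proof (rule affine_conjugating_bij_mobius[OF \<open>bij \<alpha>\<close>])
    fix s t :: real
    assume "s \<noteq> 0"
    then obtain m where "is_mobius m" "\<beta> \<circ> mobius s t 0 1 = m \<circ> \<alpha>"
      using conj[OF affine] by blast
    then have "m\<^sub>0 \<circ> (\<alpha> \<circ> mobius s t 0 1) = m \<circ> \<alpha>" using m\<^sub>0(2) by (simp add: o_assoc)
    then have "\<alpha> \<circ> mobius s t 0 1 = inv m\<^sub>0 \<circ> (m \<circ> \<alpha>)" by (rule is_mobius_comp_cancel[OF m\<^sub>0(1)])
    then have "\<alpha> \<circ> mobius s t 0 1 = (inv m\<^sub>0 \<circ> m) \<circ> \<alpha>" by (simp add: o_assoc)
    moreover have "is_mobius (inv m\<^sub>0 \<circ> m)"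
      using m\<^sub>0(1) \<open>is_mobius m\<close> by (simp add: is_mobius_comp is_mobius_inv)
    ultimately show "\<exists>m. is_mobius m \<and> \<alpha> \<circ> mobius s t 0 1 = m \<circ> \<alpha>" by blast
  qed
  obtain m where "is_mobius m" "\<beta> \<circ> h = m \<circ> \<alpha>" using conj[OF \<open>h \<in> G\<close>] by blast
  then have "m\<^sub>0 \<circ> (\<alpha> \<circ> h) = m \<circ> \<alpha>" using m\<^sub>0(2) by (simp add: o_assoc)
  then have "\<alpha> \<circ> h = inv m\<^sub>0 \<circ> (m \<circ> \<alpha>)" by (rule is_mobius_comp_cancel[OF m\<^sub>0(1)])
  then have "h = inv \<alpha> \<circ> (inv m\<^sub>0 \<circ> (m \<circ> \<alpha>))" by (rule is_mobius_comp_cancel[OF \<open>is_mobius \<alpha>\<close>])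
  with \<open>is_mobius \<alpha>\<close> \<open>is_mobius m\<close> m\<^sub>0(1) show ?thesis by (simp add: is_mobius_comp is_mobius_inv)
qed

lemma mobius_swapping_0_Infty_eq_reciprocal:
  assumes "is_mobius h" "h Infty = Fin 0" "h (Fin 0) = Infty" "h (Fin 1) = Fin 1" "x \<noteq> 0"
  shows "h (Fin x) = Fin (1 / x)"
proof -
  obtain p q r s where "p * s - q * r \<noteq> 0" and h: "h = mobius p q r s"
    using assms(1) unfolding is_mobius_def by blast
  with assms(2,3) have "r \<noteq> 0" "p = 0" "s = 0" by (auto simp: mobius_Fin mobius_Infty split: if_splits)
  with assms(4) h have "q = r" by (simp add: mobius_Fin)
  with h \<open>r \<noteq> 0\<close> \<open>p = 0\<close> \<open>s = 0\<close> assms(5) show ?thesis by (simp add: mobius_Fin)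
qed

section \<open>Parallelism\<close>

definition parallel :: "'a \<times> 'b \<Rightarrow> 'a \<times> 'b \<Rightarrow> bool" where
  "parallel p q \<longleftrightarrow> fst p = fst q \<or> snd p = snd q"

definition parallel_free :: "('a \<times> 'b) set set \<Rightarrow> bool" where
  "parallel_free CC \<longleftrightarrow> (\<forall>C\<in>CC. \<forall>p\<in>C. \<forall>q\<in>C. parallel p q \<longrightarrow> p = q)"

definition joining :: "('a \<times> 'b) set set \<Rightarrow> bool" where
  "joining CC \<longleftrightarrow> (\<forall>p q. \<not> parallel p q \<longrightarrow> (\<exists>C\<in>CC. p \<in> C \<and> q \<in> C))"

lemma parallel_freeD:
  "parallel_free CC \<Longrightarrow> C \<in> CC \<Longrightarrow> p \<in> C \<Longrightarrow> q \<in> C \<Longrightarrow> parallel p q \<Longrightarrow> p = q"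
  unfolding parallel_free_def by blast

lemma parallel_freeI:
  assumes "\<And>C u v u' v'. C \<in> CC \<Longrightarrow> (u, v) \<in> C \<Longrightarrow> (u', v') \<in> C \<Longrightarrow> u = u' \<or> v = v' \<Longrightarrow> u = u' \<and> v = v'"
  shows "parallel_free CC"
  using assms unfolding parallel_free_def parallel_def by fastforce

lemma parallel_free_Un: "parallel_free (A \<union> B) \<longleftrightarrow> parallel_free A \<and> parallel_free B"
  unfolding parallel_free_def by blast

lemma joiningE:
  assumes "joining CC" "\<not> parallel p q"
  obtains C where "C \<in> CC" "p \<in> C" "q \<in> C"
  using assms unfolding joining_def by blast

lemma plane_iso_parallel_iff:
  assumes iso: "plane_iso g CC CC'"
    and "parallel_free CC" "joining CC" "parallel_free CC'" "joining CC'" "p \<noteq> q"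
  shows "parallel (g p) (g q) \<longleftrightarrow> parallel p q"
proof -
  have "inj g" and circles: "bij_betw ((`) g) CC CC'"
    using iso unfolding plane_iso_def by (simp_all add: bij_is_inj)
  have "parallel p q" if "parallel (g p) (g q)"
  proof (rule ccontr)
    assume "\<not> parallel p q"
    with \<open>joining CC\<close> obtain C where "C \<in> CC" "p \<in> C" "q \<in> C" by (rule joiningE)
    then have "g p = g q"
      using parallel_freeD[OF \<open>parallel_free CC'\<close> bij_betw_apply[OF circles \<open>C \<in> CC\<close>]] that by blast
    with \<open>inj g\<close> \<open>p \<noteq> q\<close> show False by (simp add: inj_eq)
  qed
  moreover have "parallel (g p) (g q)" if "parallel p q"
  proof (rule ccontr)
    assume "\<not> parallel (g p) (g q)"
    with \<open>joining CC'\<close> obtain K where "K \<in> CC'" "g p \<in> K" "g q \<in> K" by (rule joiningE)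
    moreover from \<open>K \<in> CC'\<close> obtain C where "C \<in> CC" "K = g ` C"
      using circles unfolding bij_betw_def by blast
    ultimately have "p \<in> C" "q \<in> C" using \<open>inj g\<close> by (simp_all add: inj_image_mem_iff)
    with parallel_freeD[OF \<open>parallel_free CC\<close> \<open>C \<in> CC\<close>] \<open>p \<noteq> q\<close> that show False by blast
  qed
  ultimately show ?thesis by blast
qed

lemma parallel_preserving_rectangle:
  fixes g :: "'a \<times> 'b \<Rightarrow> 'c \<times> 'd"
  assumes pres: "\<And>p q. p \<noteq> q \<Longrightarrow> parallel (g p) (g q) \<longleftrightarrow> parallel p q"
    and "x \<noteq> x'" "y \<noteq> y'"
  shows "fst (g (x, y)) = fst (g (x, y')) \<longleftrightarrow> fst (g (x, y)) \<noteq> fst (g (x', y))"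
proof -
  have "\<not> parallel (g (x, y')) (g (x', y))"
    using pres[of "(x, y')" "(x', y)"] assms(2,3) by (simp add: parallel_def)
  moreover have "parallel (g (x, y)) (g (x, y'))" "parallel (g (x, y)) (g (x', y))"
    using pres[of "(x, y)" "(x, y')"] pres[of "(x, y)" "(x', y)"] assms(2,3) by (simp_all add: parallel_def)
  ultimately show ?thesis unfolding parallel_def by argo
qed

lemma parallel_preserving_fst_cases:
  fixes g :: "'a \<times> 'b \<Rightarrow> 'c \<times> 'd" and a a' :: 'a and b b' :: 'b
  assumes pres: "\<And>p q. p \<noteq> q \<Longrightarrow> parallel (g p) (g q) \<longleftrightarrow> parallel p q"
    and "a \<noteq> a'" "b \<noteq> b'"
  obtains K where "\<And>x y y'. y \<noteq> y' \<Longrightarrow> fst (g (x, y)) = fst (g (x, y')) \<longleftrightarrow> K"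
    and "\<And>x x' y. x \<noteq> x' \<Longrightarrow> fst (g (x, y)) = fst (g (x', y)) \<longleftrightarrow> \<not> K"
proof -
  define V where "V x y y' \<longleftrightarrow> fst (g (x, y)) = fst (g (x, y'))" for x y y'
  define H where "H y x x' \<longleftrightarrow> fst (g (x, y)) = fst (g (x', y))" for y x x'
  have rect: "V x y y' \<longleftrightarrow> \<not> H y x x'" if "x \<noteq> x'" "y \<noteq> y'" for x x' y y'
    using parallel_preserving_rectangle[OF pres that] unfolding V_def H_def by simp
  have V_sym: "V x y y' \<longleftrightarrow> V x y' y" and H_sym: "H y x x' \<longleftrightarrow> H y x' x" for x x' y y'
    unfolding V_def H_def by auto
  have V_indep: "V x y y' \<longleftrightarrow> V x' y y'" if "y \<noteq> y'" for x x' y y'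
    using rect[of x x' y y'] rect[of x' x y y'] H_sym[of y x x'] that by (cases "x = x'") blast+
  have H_indep: "H y x x' \<longleftrightarrow> H y' x x'" if "x \<noteq> x'" for x x' y y'
    using rect[of x x' y y'] rect[of x x' y' y] V_sym[of x y y'] that by (cases "y = y'") blast+
  have V_const: "V x y y' \<longleftrightarrow> V a b b'" if "y \<noteq> y'" for x y y'
    using V_indep[OF that, of x a] rect[of a a' y y'] H_indep[of a a' y b] rect[of a a' b b'] that assms(2,3)
    by blast
  have H_const: "H y x x' \<longleftrightarrow> \<not> V a b b'" if "x \<noteq> x'" for x x' y
    using H_indep[OF that, of y b] rect[of x x' b b'] V_const[of b b' x] that assms(3) by blast
  from V_const H_const show thesis by (intro that[of "V a b b'"]) (simp_all add: V_def H_def)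
qed

lemma parallel_preserving_cases:
  fixes g :: "'a \<times> 'b \<Rightarrow> 'c \<times> 'd" and a a' :: 'a and b b' :: 'b
  assumes pres: "\<And>p q. p \<noteq> q \<Longrightarrow> parallel (g p) (g q) \<longleftrightarrow> parallel p q"
    and "a \<noteq> a'" "b \<noteq> b'"
  obtains "\<And>p q. fst p = fst q \<Longrightarrow> fst (g p) = fst (g q)" "\<And>p q. snd p = snd q \<Longrightarrow> snd (g p) = snd (g q)"
    | "\<And>p q. fst p = fst q \<Longrightarrow> snd (g p) = snd (g q)" "\<And>p q. snd p = snd q \<Longrightarrow> fst (g p) = fst (g q)"
proof -
  obtain K where V: "\<And>x y y'. y \<noteq> y' \<Longrightarrow> fst (g (x, y)) = fst (g (x, y')) \<longleftrightarrow> K"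
    and H: "\<And>x x' y. x \<noteq> x' \<Longrightarrow> fst (g (x, y)) = fst (g (x', y)) \<longleftrightarrow> \<not> K"
    using parallel_preserving_fst_cases[OF pres assms(2,3)] by blast
  have images: "fst (g p) = fst (g q) \<or> snd (g p) = snd (g q)" if "parallel p q" for p q
    using pres[of p q] that unfolding parallel_def by (cases "p = q") blast+
  have vertical: "fst (g (x, y)) = fst (g (x, y')) \<longleftrightarrow> K \<or> y = y'"
    and vertical': "\<not> K \<Longrightarrow> snd (g (x, y)) = snd (g (x, y'))" for x y y'
    using V[of y y' x] images[of "(x, y)" "(x, y')"] by (auto simp: parallel_def)
  have horizontal: "fst (g (x, y)) = fst (g (x', y)) \<longleftrightarrow> \<not> K \<or> x = x'"
    and horizontal': "K \<Longrightarrow> snd (g (x, y)) = snd (g (x', y))" for x x' y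
    using H[of x x' y] images[of "(x, y)" "(x', y)"] by (auto simp: parallel_def)
  show thesis
  proof (cases K)
    case True
    with vertical horizontal' show thesis by (intro that(1)) (metis prod.collapse)+
  next
    case False
    with vertical' horizontal show thesis by (intro that(2)) (metis prod.collapse)+
  qed
qed

lemma parallel_preserving_map_prod:
  fixes g :: "'a \<times> 'a \<Rightarrow> 'b \<times> 'b" and a a' :: 'a
  assumes pres: "\<And>p q. p \<noteq> q \<Longrightarrow> parallel (g p) (g q) \<longleftrightarrow> parallel p q"
    and "a \<noteq> a'"
  shows "\<exists>\<sigma> \<tau>. g = map_prod \<sigma> \<tau> \<or> g = map_prod \<sigma> \<tau> \<circ> prod.swap"
proof (rule parallel_preserving_cases[OF pres assms(2) assms(2)])
  assume fst: "\<And>p q. fst p = fst q \<Longrightarrow> fst (g p) = fst (g q)"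
    and snd: "\<And>p q. snd p = snd q \<Longrightarrow> snd (g p) = snd (g q)"
  define \<sigma> \<tau> where "\<sigma> x = fst (g (x, a))" and "\<tau> y = snd (g (a, y))" for x y
  have "g (x, y) = map_prod \<sigma> \<tau> (x, y)" for x y
    using fst[of "(x, y)" "(x, a)"] snd[of "(x, y)" "(a, y)"] by (simp add: prod_eq_iff \<sigma>_def \<tau>_def)
  then have "g = map_prod \<sigma> \<tau>" by (simp add: fun_eq_iff)
  then show ?thesis by blast
next
  assume fst_snd: "\<And>p q. fst p = fst q \<Longrightarrow> snd (g p) = snd (g q)"
    and snd_fst: "\<And>p q. snd p = snd q \<Longrightarrow> fst (g p) = fst (g q)"
  define \<sigma> \<tau> where "\<sigma> y = fst (g (a, y))" and "\<tau> x = snd (g (x, a))" for x y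
  have "g (x, y) = (map_prod \<sigma> \<tau> \<circ> prod.swap) (x, y)" for x y
    using fst_snd[of "(x, y)" "(x, a)"] snd_fst[of "(x, y)" "(a, y)"] by (simp add: prod_eq_iff \<sigma>_def \<tau>_def)
  then have "g = map_prod \<sigma> \<tau> \<circ> prod.swap" by (simp add: fun_eq_iff del: comp_apply)
  then show ?thesis by blast
qed

lemma bij_map_prodD:
  assumes "bij (map_prod \<sigma> \<tau>)"
  shows "bij \<sigma>" "bij \<tau>"
proof -
  have "inj \<sigma>" "inj \<tau>" using bij_is_inj[OF assms] by (auto simp: inj_def)
  moreover have "\<exists>p. x = \<sigma> (fst p) \<and> y = \<tau> (snd p)" for x y
    using surjD[OF bij_is_surj[OF assms], of "(x, y)"] by (auto simp: map_prod_def split: prod.splits)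
  then have "surj \<sigma>" "surj \<tau>" unfolding surj_def by blast+
  ultimately show "bij \<sigma>" "bij \<tau>" by (simp_all add: bij_def)
qed

definition circle_maps :: "point set set \<Rightarrow> (ext \<Rightarrow> ext) set" where
  "circle_maps CC = {h. \<exists>C\<in>CC. \<forall>u. (u, h u) \<in> C}"

lemma circle_maps_through:
  "h \<in> circle_maps CC \<Longrightarrow> h u = v \<Longrightarrow> h u' = v' \<Longrightarrow> \<exists>C\<in>CC. (u, v) \<in> C \<and> (u', v') \<in> C"
  unfolding circle_maps_def by blast

lemma circle_maps_Un: "circle_maps (A \<union> B) = circle_maps A \<union> circle_maps B"
  unfolding circle_maps_def by blast

lemma point_set_eqI:
  fixes A B :: "point set"
  assumes "\<And>x y. (Fin x, Fin y) \<in> A \<longleftrightarrow> (Fin x, Fin y) \<in> B"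
    and "\<And>x. (Fin x, Infty) \<in> A \<longleftrightarrow> (Fin x, Infty) \<in> B"
    and "\<And>y. (Infty, Fin y) \<in> A \<longleftrightarrow> (Infty, Fin y) \<in> B"
    and "(Infty, Infty) \<in> A \<longleftrightarrow> (Infty, Infty) \<in> B"
  shows "A = B"
proof (rule set_eqI)
  fix p :: point
  obtain u v where "p = (u, v)" by fastforce
  with assms show "p \<in> A \<longleftrightarrow> p \<in> B" by (cases u; cases v) simp_all
qed

lemma joining_pointI:
  fixes CC :: "point set set"
  assumes fin: "\<And>x y x' y'. x \<noteq> x' \<Longrightarrow> y \<noteq> y' \<Longrightarrow> \<exists>C\<in>CC. (Fin x, Fin y) \<in> C \<and> (Fin x', Fin y') \<in> C"
    and inf_inf: "\<And>x y. \<exists>C\<in>CC. (Infty, Infty) \<in> C \<and> (Fin x, Fin y) \<in> C"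
    and inf_fin: "\<And>b c. \<exists>C\<in>CC. (Infty, Fin c) \<in> C \<and> (Fin b, Infty) \<in> C"
    and inf_y: "\<And>x y c. y \<noteq> c \<Longrightarrow> \<exists>C\<in>CC. (Infty, Fin c) \<in> C \<and> (Fin x, Fin y) \<in> C"
    and x_inf: "\<And>x y b. x \<noteq> b \<Longrightarrow> \<exists>C\<in>CC. (Fin b, Infty) \<in> C \<and> (Fin x, Fin y) \<in> C"
  shows "joining CC"
proof -
  have sym: "\<exists>C\<in>CC. q \<in> C \<and> p \<in> C" if "\<exists>C\<in>CC. p \<in> C \<and> q \<in> C" for p q
    using that by blast
  have "\<exists>C\<in>CC. (u, v) \<in> C \<and> (u', v') \<in> C" if "u \<noteq> u'" "v \<noteq> v'" for u v u' v'
    using that fin inf_inf inf_fin inf_y x_inf sym[OF inf_inf] sym[OF inf_fin] sym[OF inf_y] sym[OF x_inf]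
    by (cases u; cases v; cases u'; cases v') simp_all
  then show ?thesis unfolding joining_def parallel_def by (metis prod.collapse)
qed

section \<open>The classical flat Minkowski plane\<close>

definition hyperbola :: "real \<Rightarrow> real \<Rightarrow> real \<Rightarrow> point set" where
  "hyperbola a b c = {(Fin x, Fin y) | x y. (x - b) * (y - c) = a} \<union> {(Infty, Fin c), (Fin b, Infty)}"

lemma line_circle_Fin [simp]: "(Fin x, Fin y) \<in> line_circle s t \<longleftrightarrow> y = s * x + t"
  and line_circle_Infty [simp]: "(Infty, Infty) \<in> line_circle s t"
    "(Infty, Fin y) \<notin> line_circle s t" "(Fin x, Infty) \<notin> line_circle s t"
  by (auto simp: line_circle_def)

lemma hyperbola_Fin [simp]: "(Fin x, Fin y) \<in> hyperbola a b c \<longleftrightarrow> (x - b) * (y - c) = a"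
  and hyperbola_Infty [simp]: "(Infty, Fin y) \<in> hyperbola a b c \<longleftrightarrow> y = c"
    "(Fin x, Infty) \<in> hyperbola a b c \<longleftrightarrow> x = b" "(Infty, Infty) \<notin> hyperbola a b c"
  by (auto simp: hyperbola_def)

lemma classical_circles_eq:
  "classical_circles = {line_circle s t | s t. s \<noteq> 0} \<union> {hyperbola a b c | a b c. a \<noteq> 0}"
  unfolding classical_circles_def hyperbola_def by simp

lemma classical_circle_mobius_graph:
  assumes "K \<in> classical_circles"
  shows "\<exists>m. is_mobius m \<and> (\<forall>p\<in>K. snd p = m (fst p))"
  using assms unfolding classical_circles_eq
proof (elim UnE CollectE exE conjE)
  fix s t assume "K = line_circle s t" "s \<noteq> 0"
  then show ?thesis
    by (intro exI[of _ "mobius s t 0 1"]) (auto simp: is_mobius_affine line_circle_def)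
next
  fix a b c assume K: "K = hyperbola a b c" and "a \<noteq> 0"
  have "snd p = mobius c (a - c * b) 1 (- b) (fst p)" if "p \<in> K" for p
  proof -
    from that consider x y where "p = (Fin x, Fin y)" "(x - b) * (y - c) = a"
      | "p = (Infty, Fin c)" | "p = (Fin b, Infty)"
      unfolding K hyperbola_def by blast
    then show ?thesis
    proof cases
      case 1
      with \<open>a \<noteq> 0\<close> have "x - b \<noteq> 0" by auto
      with 1 have "y = (c * x + (a - c * b)) / (x - b)" by (simp add: field_simps)
      with 1 \<open>x - b \<noteq> 0\<close> show ?thesis by (simp add: mobius_Fin)
    qed (simp_all add: mobius_Fin mobius_Infty)
  qed
  moreover have "is_mobius (mobius c (a - c * b) 1 (- b))"
    using \<open>a \<noteq> 0\<close> by (intro is_mobiusI) (simp add: algebra_simps)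
  ultimately show ?thesis by blast
qed

lemma parallel_free_classical: "parallel_free classical_circles"
  unfolding parallel_free_def
proof (intro ballI impI)
  fix K p q
  assume "K \<in> classical_circles" "p \<in> K" "q \<in> K" "parallel p q"
  then obtain m where "is_mobius m" "snd p = m (fst p)" "snd q = m (fst q)"
    using classical_circle_mobius_graph by blast
  moreover from \<open>is_mobius m\<close> have "inj m" by (simp add: is_mobius_bij bij_is_inj)
  ultimately show "p = q"
    using \<open>parallel p q\<close> unfolding parallel_def by (metis inj_eq prod_eqI)
qed

lemma joining_classical: "joining classical_circles"
proof (rule joining_pointI)
  have line_in: "line_circle s t \<in> classical_circles" if "s \<noteq> 0" for s t
    using that unfolding classical_circles_eq by blast
  have hyperbola_in: "hyperbola a b c \<in> classical_circles" if "a \<noteq> 0" for a b c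
    using that unfolding classical_circles_eq by blast
  show "\<exists>C\<in>classical_circles. (Fin x, Fin y) \<in> C \<and> (Fin x', Fin y') \<in> C"
    if "x \<noteq> x'" "y \<noteq> y'" for x y x' y'
  proof -
    define s where "s = (y' - y) / (x' - x)"
    have "s \<noteq> 0" "s * (x' - x) = y' - y" using that by (simp_all add: s_def)
    then have "(Fin x, Fin y) \<in> line_circle s (y - s * x)" "(Fin x', Fin y') \<in> line_circle s (y - s * x)"
      by (simp_all add: algebra_simps)
    with line_in[OF \<open>s \<noteq> 0\<close>] show ?thesis by blast
  qed
  show "\<exists>C\<in>classical_circles. (Infty, Infty) \<in> C \<and> (Fin x, Fin y) \<in> C" for x y
  proof -
    have "line_circle 1 (y - x) \<in> classical_circles" by (rule line_in) simp
    moreover have "(Infty, Infty) \<in> line_circle 1 (y - x)" "(Fin x, Fin y) \<in> line_circle 1 (y - x)"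
      by simp_all
    ultimately show ?thesis by blast
  qed
  show "\<exists>C\<in>classical_circles. (Infty, Fin c) \<in> C \<and> (Fin b, Infty) \<in> C" for b c
  proof -
    have "hyperbola 1 b c \<in> classical_circles" by (rule hyperbola_in) simp
    moreover have "(Infty, Fin c) \<in> hyperbola 1 b c" "(Fin b, Infty) \<in> hyperbola 1 b c" by simp_all
    ultimately show ?thesis by blast
  qed
  show "\<exists>C\<in>classical_circles. (Infty, Fin c) \<in> C \<and> (Fin x, Fin y) \<in> C" if "y \<noteq> c" for x y c
  proof -
    have "hyperbola (y - c) (x - 1) c \<in> classical_circles" by (rule hyperbola_in) (use that in simp)
    moreover have "(Infty, Fin c) \<in> hyperbola (y - c) (x - 1) c" "(Fin x, Fin y) \<in> hyperbola (y - c) (x - 1) c"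
      by simp_all
    ultimately show ?thesis by blast
  qed
  show "\<exists>C\<in>classical_circles. (Fin b, Infty) \<in> C \<and> (Fin x, Fin y) \<in> C" if "x \<noteq> b" for x y b
  proof -
    have "hyperbola (x - b) b (y - 1) \<in> classical_circles" by (rule hyperbola_in) (use that in simp)
    moreover have "(Fin b, Infty) \<in> hyperbola (x - b) b (y - 1)" "(Fin x, Fin y) \<in> hyperbola (x - b) b (y - 1)"
      by simp_all
    ultimately show ?thesis by blast
  qed
qed

lemma plane_iso_classical_image_graph:
  assumes "plane_iso g CC classical_circles" "h \<in> circle_maps CC"
  shows "\<exists>m. is_mobius m \<and> (\<forall>u. snd (g (u, h u)) = m (fst (g (u, h u))))"
proof -
  from assms(2) obtain C where C: "C \<in> CC" "\<forall>u. (u, h u) \<in> C" unfolding circle_maps_def by blast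
  with assms(1) have "g ` C \<in> classical_circles" unfolding plane_iso_def by (blast dest: bij_betw_apply)
  then obtain m where m: "is_mobius m" "\<forall>p\<in>g ` C. snd p = m (fst p)"
    using classical_circle_mobius_graph by blast
  have "snd (g (u, h u)) = m (fst (g (u, h u)))" for u
    using bspec[OF m(2) imageI[OF C(2)[rule_format, of u]]] .
  with m(1) show ?thesis by (intro exI[of _ m]) simp
qed

lemma plane_iso_classical_conjugation:
  assumes iso: "plane_iso g CC classical_circles" and "parallel_free CC" "joining CC"
  obtains \<alpha> \<beta> where "bij \<alpha>" "\<And>h. h \<in> circle_maps CC \<Longrightarrow> \<exists>m. is_mobius m \<and> \<beta> \<circ> h = m \<circ> \<alpha>"
proof -
  have "bij g" using iso unfolding plane_iso_def by simp
  have "parallel (g p) (g q) \<longleftrightarrow> parallel p q" if "p \<noteq> q" for p q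
    using plane_iso_parallel_iff[OF iso assms(2,3) parallel_free_classical joining_classical that] .
  then obtain \<sigma> \<tau> where g: "g = map_prod \<sigma> \<tau> \<or> g = map_prod \<sigma> \<tau> \<circ> prod.swap"
    using parallel_preserving_map_prod[of g Infty "Fin 0"] by blast
  note graph = plane_iso_classical_image_graph[OF iso]
  from g show thesis
  proof
    assume g: "g = map_prod \<sigma> \<tau>"
    with \<open>bij g\<close> have "bij \<sigma>" using bij_map_prodD(1) by blast
    moreover have "\<exists>m. is_mobius m \<and> \<tau> \<circ> h = m \<circ> \<sigma>" if "h \<in> circle_maps CC" for h
      using graph[OF that] g by (auto simp: fun_eq_iff)
    ultimately show thesis by (rule that)
  next
    assume g: "g = map_prod \<sigma> \<tau> \<circ> prod.swap"
    then have "map_prod \<sigma> \<tau> = g \<circ> prod.swap" by (simp add: comp_assoc)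
    with \<open>bij g\<close> have "bij \<tau>" using bij_comp[OF bij_swap, of g] bij_map_prodD(2) by metis
    moreover have "\<exists>m. is_mobius m \<and> \<sigma> \<circ> h = m \<circ> \<tau>" if h: "h \<in> circle_maps CC" for h
    proof -
      obtain m where "is_mobius m" "\<forall>u. \<tau> u = m (\<sigma> (h u))" using graph[OF h] g by auto
      then have "m \<circ> (\<sigma> \<circ> h) = \<tau>" by (simp add: fun_eq_iff)
      then have "\<sigma> \<circ> h = inv m \<circ> \<tau>" by (rule is_mobius_comp_cancel[OF \<open>is_mobius m\<close>])
      with \<open>is_mobius m\<close> show ?thesis by (blast intro: is_mobius_inv)
    qed
    ultimately show thesis by (rule that)
  qed
qed

lemma plane_iso_classical_circle_maps_mobius:
  assumes "plane_iso g CC classical_circles" "parallel_free CC" "joining CC"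
    and "\<And>s t. s \<noteq> 0 \<Longrightarrow> mobius s t 0 1 \<in> circle_maps CC"
    and "h \<in> circle_maps CC"
  shows "is_mobius h"
proof -
  obtain \<alpha> \<beta> where "bij \<alpha>" "\<And>h. h \<in> circle_maps CC \<Longrightarrow> \<exists>m. is_mobius m \<and> \<beta> \<circ> h = m \<circ> \<alpha>"
    using plane_iso_classical_conjugation[OF assms(1-3)] by blast
  from conjugate_mobius_imp_mobius[OF this assms(4,5)] show ?thesis .
qed

section \<open>The planes M(f1, f2; f3, f4)\<close>

lemma strictly_convex_tendsto_0_decreasing:
  fixes f :: "real \<Rightarrow> real"
  assumes conv: "strictly_convex_on {0<..} f" and lim: "(f \<longlongrightarrow> 0) at_top"
    and pos: "\<And>x. 0 < x \<Longrightarrow> 0 < f x" and "0 < x" "x < y"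
  shows "f y < f x"
proof (rule ccontr)
  assume "\<not> f y < f x"
  text \<open>Then convexity forces \<open>f\<close> to increase beyond \<open>y\<close>, contradicting \<open>f \<longlongrightarrow> 0\<close>.\<close>
  have grow: "f y < f z" if "y < z" for z
  proof -
    define t where "t = (y - x) / (z - x)"
    have t: "0 < t" "t < 1" using assms(4,5) that by (auto simp: t_def field_simps)
    have "t * (z - x) = y - x" using assms(5) that by (simp add: t_def)
    then have "(1 - t) * x + t * z = y" by (simp add: algebra_simps)
    then have "f y < (1 - t) * f x + t * f z"
      using conv assms(4,5) that t unfolding strictly_convex_on_def by force
    also have "\<dots> \<le> (1 - t) * f y + t * f z"
      using \<open>\<not> f y < f x\<close> t by (simp add: mult_left_mono)
    finally show ?thesis using t by (simp add: algebra_simps)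
  qed
  have "eventually (\<lambda>z. f z < f y \<and> y < z) at_top"
    using order_tendstoD(2)[OF lim pos] assms(4,5) eventually_gt_at_top by (auto intro: eventually_conj)
  then obtain z where "f z < f y" "y < z" by (auto simp: eventually_at_top_linorder)
  with grow show False by fastforce
qed

lemma strongly_hyperbolic_pos: "strongly_hyperbolic f \<Longrightarrow> 0 < x \<Longrightarrow> 0 < f x"
  unfolding strongly_hyperbolic_def by blast

lemma strongly_hyperbolic_decreasing:
  "strongly_hyperbolic f \<Longrightarrow> 0 < x \<Longrightarrow> x < y \<Longrightarrow> f y < f x"
  by (rule strictly_convex_tendsto_0_decreasing)
    (auto simp: strongly_hyperbolic_def)

lemma strongly_hyperbolic_inj:
  assumes "strongly_hyperbolic f" "0 < x" "0 < y" "f x = f y"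
  shows "x = y"
  using strongly_hyperbolic_decreasing[OF assms(1)] assms(2-4)
  by (metis less_irrefl linorder_neqE_linordered_idom)

lemma fabc_circle_Fin [simp]:
    "(Fin x, Fin y) \<in> fabc_circle f1 f2 a b c \<longleftrightarrow> x \<noteq> - b \<and> y = fabc f1 f2 a b c x"
  and fabc_circle_Infty [simp]:
    "(Fin x, Infty) \<in> fabc_circle f1 f2 a b c \<longleftrightarrow> x = - b"
    "(Infty, Fin y) \<in> fabc_circle f1 f2 a b c \<longleftrightarrow> y = c"
    "(Infty, Infty) \<notin> fabc_circle f1 f2 a b c"
  by (auto simp: fabc_circle_def)

lemma fabc_gt: "strongly_hyperbolic f1 \<Longrightarrow> 0 < a \<Longrightarrow> - b < x \<Longrightarrow> c < fabc f1 f2 a b c x"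
  and fabc_lt: "strongly_hyperbolic f2 \<Longrightarrow> 0 < a \<Longrightarrow> x < - b \<Longrightarrow> fabc f1 f2 a b c x < c"
  using strongly_hyperbolic_pos[of f1 "x + b"] strongly_hyperbolic_pos[of f2 "- x - b"]
  by (simp_all add: fabc_def)

lemma fabc_inj:
  assumes "strongly_hyperbolic f1" "strongly_hyperbolic f2" "0 < a"
    and "x \<noteq> - b" "y \<noteq> - b" "fabc f1 f2 a b c x = fabc f1 f2 a b c y"
  shows "x = y"
proof -
  consider "- b < x" "- b < y" | "x < - b" "y < - b" | "- b < x" "y < - b" | "x < - b" "- b < y"
    using assms(4,5) by linarith
  then show ?thesis
  proof cases
    case 1
    then have "f1 (x + b) = f1 (y + b)" using assms(3,6) by (simp add: fabc_def)
    with 1 show ?thesis using strongly_hyperbolic_inj[OF assms(1), of "x + b" "y + b"] by simp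
  next
    case 2
    then have "f2 (- x - b) = f2 (- y - b)" using assms(3,6) by (simp add: fabc_def)
    with 2 show ?thesis using strongly_hyperbolic_inj[OF assms(2), of "- x - b" "- y - b"] by simp
  next
    case 3
    then have "fabc f1 f2 a b c y < c" "c < fabc f1 f2 a b c x"
      using fabc_gt[OF assms(1,3)] fabc_lt[OF assms(2,3)] by blast+
    with assms(6) show ?thesis by simp
  next
    case 4
    then have "fabc f1 f2 a b c x < c" "c < fabc f1 f2 a b c y"
      using fabc_gt[OF assms(1,3)] fabc_lt[OF assms(2,3)] by blast+
    with assms(6) show ?thesis by simp
  qed
qed

lemma fabc_neq_c: "strongly_hyperbolic f1 \<Longrightarrow> strongly_hyperbolic f2 \<Longrightarrow> 0 < a \<Longrightarrow> x \<noteq> - b \<Longrightarrow>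
    fabc f1 f2 a b c x \<noteq> c"
  by (metis fabc_gt fabc_lt linorder_neqE_linordered_idom order_less_irrefl)

lemma ext_neg_eq_iff [simp]: "ext_neg u = ext_neg v \<longleftrightarrow> u = v"
  by (cases u; cases v) auto

lemma ext_neg_ext_neg [simp]: "ext_neg (ext_neg u) = u"
  by (cases u) simp_all

lemma ext_neg_comp_ext_neg [simp]: "ext_neg \<circ> ext_neg = id"
  by (simp add: fun_eq_iff)

lemma is_mobius_comp_ext_neg_iff: "is_mobius (h \<circ> ext_neg) \<longleftrightarrow> is_mobius h"
proof -
  have "ext_neg = mobius (- 1) 0 0 1" by (rule ext_fun_eqI) simp_all
  then have "is_mobius ext_neg" using is_mobius_affine[of "- 1" 0] by simp
  moreover have "h = (h \<circ> ext_neg) \<circ> ext_neg" by (simp add: comp_assoc)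
  ultimately show ?thesis by (metis is_mobius_comp)
qed

lemma parallel_refl_x [simp]: "parallel (refl_x p) (refl_x q) \<longleftrightarrow> parallel p q"
  by (simp add: parallel_def refl_x_def)

lemma parallel_free_refl_x:
  assumes "parallel_free CC"
  shows "parallel_free ((`) refl_x ` CC)"
  unfolding parallel_free_def
proof (intro ballI impI)
  fix D p q
  assume "D \<in> (`) refl_x ` CC" "p \<in> D" "q \<in> D" "parallel p q"
  then obtain C p' q' where "C \<in> CC" "p' \<in> C" "q' \<in> C" "p = refl_x p'" "q = refl_x q'" by blast
  moreover from this \<open>parallel p q\<close> have "parallel p' q'" by simp
  ultimately show "p = q" using parallel_freeD[OF assms] by metis
qed

lemma parallel_free_Cminus:
  assumes "strongly_hyperbolic f1" "strongly_hyperbolic f2"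
  shows "parallel_free (Cminus f1 f2)"
proof (rule parallel_freeI)
  fix C u v u' v'
  assume C: "C \<in> Cminus f1 f2" and uv: "(u, v) \<in> C" "(u', v') \<in> C" "u = u' \<or> v = v'"
  from C consider a b c where "0 < a" "C = fabc_circle f1 f2 a b c" | s t where "s < 0" "C = line_circle s t"
    unfolding Cminus_def by blast
  then show "u = u' \<and> v = v'"
  proof cases
    case 1
    have inj: "fabc f1 f2 a b c x = fabc f1 f2 a b c x' \<longleftrightarrow> x = x'" if "x \<noteq> - b" "x' \<noteq> - b" for x x'
      using fabc_inj[OF assms \<open>0 < a\<close> that] by blast
    have neq: "fabc f1 f2 a b c x \<noteq> c" "c \<noteq> fabc f1 f2 a b c x" if "x \<noteq> - b" for x
      using fabc_neq_c[OF assms \<open>0 < a\<close> that, where c = c] by auto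
    from uv show ?thesis unfolding 1(2) by (cases u; cases v; cases u'; cases v') (auto simp: inj neq)
  next
    case 2
    from uv \<open>s < 0\<close> show ?thesis unfolding 2(2) by (cases u; cases v; cases u'; cases v') auto
  qed
qed

lemma parallel_free_M:
  "strongly_hyperbolic f1 \<Longrightarrow> strongly_hyperbolic f2 \<Longrightarrow> strongly_hyperbolic f3 \<Longrightarrow> strongly_hyperbolic f4 \<Longrightarrow>
    parallel_free (M_circles f1 f2 f3 f4)"
  unfolding M_circles_def Cplus_def parallel_free_Un by (simp add: parallel_free_Cminus parallel_free_refl_x)

lemma circle_maps_Cplus:
  assumes "h \<in> circle_maps (Cminus f1 f2)"
  shows "h \<circ> ext_neg \<in> circle_maps (Cplus f1 f2)"
proof -
  obtain C where C: "C \<in> Cminus f1 f2" "\<And>u. (u, h u) \<in> C"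
    using assms unfolding circle_maps_def by blast
  have "refl_x (ext_neg u, h (ext_neg u)) = (u, h (ext_neg u))" for u
    by (cases u) (simp_all add: refl_x_def)
  then have "(u, (h \<circ> ext_neg) u) \<in> refl_x ` C" for u
    using imageI[OF C(2)[of "ext_neg u"], of refl_x] by simp
  moreover have "refl_x ` C \<in> Cplus f1 f2" using C(1) unfolding Cplus_def by blast
  ultimately show ?thesis unfolding circle_maps_def by blast
qed

lemma mobius_affine_in_circle_maps_Cminus: "s < 0 \<Longrightarrow> mobius s t 0 1 \<in> circle_maps (Cminus f1 f2)"
proof -
  have "(u, mobius s t 0 1 u) \<in> line_circle s t" for u by (cases u) simp_all
  then show "s < 0 \<Longrightarrow> mobius s t 0 1 \<in> circle_maps (Cminus f1 f2)"
    unfolding circle_maps_def Cminus_def by blast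
qed

lemma mobius_affine_in_circle_maps_M:
  assumes "s \<noteq> 0"
  shows "mobius s t 0 1 \<in> circle_maps (M_circles f1 f2 f3 f4)"
proof (cases "s < 0")
  case True
  then show ?thesis
    by (simp add: M_circles_def circle_maps_Un mobius_affine_in_circle_maps_Cminus)
next
  case False
  have "mobius s t 0 1 = mobius (- s) t 0 1 \<circ> ext_neg" by (rule ext_fun_eqI) simp_all
  moreover from False assms have "mobius (- s) t 0 1 \<in> circle_maps (Cminus f3 f4)"
    by (simp add: mobius_affine_in_circle_maps_Cminus)
  ultimately show ?thesis by (simp add: M_circles_def circle_maps_Un circle_maps_Cplus)
qed

definition fabc_map :: "(real \<Rightarrow> real) \<Rightarrow> (real \<Rightarrow> real) \<Rightarrow> real \<Rightarrow> real \<Rightarrow> real \<Rightarrow> ext \<Rightarrow> ext" where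
  "fabc_map f1 f2 a b c u =
     (case u of Fin x \<Rightarrow> if x = - b then Infty else Fin (fabc f1 f2 a b c x) | Infty \<Rightarrow> Fin c)"

lemma fabc_map_Fin [simp]:
    "fabc_map f1 f2 a b c (Fin x) = (if x = - b then Infty else Fin (fabc f1 f2 a b c x))"
  and fabc_map_Infty [simp]: "fabc_map f1 f2 a b c Infty = Fin c"
  by (simp_all add: fabc_map_def)

lemma fabc_map_in_circle_maps: "0 < a \<Longrightarrow> fabc_map f1 f2 a b c \<in> circle_maps (Cminus f1 f2)"
proof -
  have "(u, fabc_map f1 f2 a b c u) \<in> fabc_circle f1 f2 a b c" for u by (cases u) simp_all
  then show "0 < a \<Longrightarrow> fabc_map f1 f2 a b c \<in> circle_maps (Cminus f1 f2)"
    unfolding circle_maps_def Cminus_def by blast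
qed

lemma joining_M:
  assumes "0 < f1 1" "0 < f2 1"
  shows "joining (M_circles f1 f2 f3 f4)"
proof (rule joining_pointI)
  let ?M = "M_circles f1 f2 f3 f4"
  have fabc_map: "fabc_map f1 f2 a b c \<in> circle_maps ?M" if "0 < a" for a b c
    using fabc_map_in_circle_maps[OF that] by (simp add: M_circles_def circle_maps_Un)
  show "\<exists>C\<in>?M. (Fin x, Fin y) \<in> C \<and> (Fin x', Fin y') \<in> C" if "x \<noteq> x'" "y \<noteq> y'" for x y x' y'
  proof (rule circle_maps_through)
    define s where "s = (y' - y) / (x' - x)"
    have "s \<noteq> 0" "s * (x' - x) = y' - y" using that by (simp_all add: s_def)
    then show "mobius s (y - s * x) 0 1 \<in> circle_maps ?M"
      and "mobius s (y - s * x) 0 1 (Fin x) = Fin y" "mobius s (y - s * x) 0 1 (Fin x') = Fin y'"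
      by (simp_all add: mobius_affine_in_circle_maps_M algebra_simps)
  qed
  show "\<exists>C\<in>?M. (Infty, Infty) \<in> C \<and> (Fin x, Fin y) \<in> C" for x y
    by (rule circle_maps_through[of "mobius (- 1) (x + y) 0 1"]) (simp_all add: mobius_affine_in_circle_maps_M)
  show "\<exists>C\<in>?M. (Infty, Fin c) \<in> C \<and> (Fin b, Infty) \<in> C" for b c
    by (rule circle_maps_through[OF fabc_map[of 1 "- b" c]]) simp_all
  show "\<exists>C\<in>?M. (Infty, Fin c) \<in> C \<and> (Fin x, Fin y) \<in> C" if "y \<noteq> c" for x y c
  proof (cases "c < y")
    case True
    show ?thesis
      by (rule circle_maps_through[OF fabc_map[of "(y - c) / f1 1" "1 - x" c]])
        (use True assms in \<open>simp_all add: fabc_def\<close>)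
  next
    case False
    with that have "y < c" by simp
    show ?thesis
      by (rule circle_maps_through[OF fabc_map[of "(c - y) / f2 1" "- x - 1" c]])
        (use \<open>y < c\<close> assms in \<open>simp_all add: fabc_def\<close>)
  qed
  show "\<exists>C\<in>?M. (Fin b, Infty) \<in> C \<and> (Fin x, Fin y) \<in> C" if "x \<noteq> b" for x y b
  proof (cases "b < x")
    case True
    show ?thesis
      by (rule circle_maps_through[OF fabc_map[of 1 "- b" "y - f1 (x - b)"]]) (use True in \<open>simp_all add: fabc_def\<close>)
  next
    case False
    show ?thesis
      by (rule circle_maps_through[OF fabc_map[of 1 "- b" "y + f2 (b - x)"]])
        (use False that in \<open>simp_all add: fabc_def\<close>)
  qed
qed

lemma plane_iso_classical_M_circle_maps_mobius:
  assumes "strongly_hyperbolic f1" "strongly_hyperbolic f2" "strongly_hyperbolic f3" "strongly_hyperbolic f4"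
    and "plane_iso g (M_circles f1 f2 f3 f4) classical_circles"
    and "h \<in> circle_maps (M_circles f1 f2 f3 f4)"
  shows "is_mobius h"
proof (rule plane_iso_classical_circle_maps_mobius)
  show "joining (M_circles f1 f2 f3 f4)"
    by (rule joining_M) (simp_all add: assms(1,2) strongly_hyperbolic_pos)
qed (use assms parallel_free_M mobius_affine_in_circle_maps_M in auto)

lemma fabc_map_mobius_imp_reciprocal:
  assumes "is_mobius (fabc_map f1 f2 1 0 0)" "f1 1 = 1" "0 < x"
  shows "f1 x = 1 / x" "f2 x = 1 / x"
proof -
  have "fabc_map f1 f2 1 0 0 (Fin y) = Fin (1 / y)" if "y \<noteq> 0" for y
    by (rule mobius_swapping_0_Infty_eq_reciprocal) (use assms(1,2) that in \<open>simp_all add: fabc_def\<close>)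
  from this[of x] this[of "- x"] \<open>0 < x\<close> show "f1 x = 1 / x" "f2 x = 1 / x"
    by (simp_all add: fabc_def)
qed

lemma fabc_circle_reciprocal:
  assumes "\<forall>x>0. f1 x = 1 / x \<and> f2 x = 1 / x" "a \<noteq> 0"
  shows "fabc_circle f1 f2 a b c = hyperbola a (- b) c"
proof -
  have fabc_eq: "fabc f1 f2 a b c x = a / (x + b) + c" if "x \<noteq> - b" for x
  proof (cases "- b < x")
    case True
    with assms(1) show ?thesis by (simp add: fabc_def)
  next
    case False
    with that have "0 < - x - b" by simp
    moreover have "1 / (- x - b) = - (1 / (x + b))"
      using divide_minus_right[of 1 "x + b"] by simp
    ultimately have "f2 (- x - b) = - (1 / (x + b))" using assms(1) by simp
    with False show ?thesis by (simp add: fabc_def)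
  qed
  have "(Fin x, Fin y) \<in> fabc_circle f1 f2 a b c \<longleftrightarrow> (Fin x, Fin y) \<in> hyperbola a (- b) c" for x y
  proof (cases "x = - b")
    case False
    then have "y = a / (x + b) + c \<longleftrightarrow> (x + b) * (y - c) = a" by (auto simp: field_simps)
    with False show ?thesis by (simp add: fabc_eq)
  qed (simp add: assms(2))
  then show ?thesis by (intro point_set_eqI) simp_all
qed

lemma refl_x_image_iff [simp]: "(u, v) \<in> refl_x ` S \<longleftrightarrow> (ext_neg u, v) \<in> S"
proof
  assume "(u, v) \<in> refl_x ` S"
  then obtain p where "p \<in> S" "(u, v) = refl_x p" by blast
  then show "(ext_neg u, v) \<in> S" by (cases p) (simp add: refl_x_def)
next
  assume "(ext_neg u, v) \<in> S"
  then show "(u, v) \<in> refl_x ` S" by (rule rev_image_eqI) (simp add: refl_x_def)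
qed

lemma refl_x_hyperbola: "refl_x ` hyperbola a b c = hyperbola (- a) (- b) c"
  by (rule point_set_eqI) (auto simp: algebra_simps)

lemma refl_x_line_circle: "refl_x ` line_circle s t = line_circle (- s) t"
  by (rule point_set_eqI) auto

lemma Cminus_reciprocal:
  assumes "\<forall>x>0. f1 x = 1 / x \<and> f2 x = 1 / x"
  shows "Cminus f1 f2 = {hyperbola a b c | a b c. 0 < a} \<union> {line_circle s t | s t. s < 0}"
proof -
  have eq: "fabc_circle f1 f2 a b c = hyperbola a (- b) c" if "0 < a" for a b c
    using fabc_circle_reciprocal[OF assms] that by simp
  have "hyperbola a b c \<in> Cminus f1 f2" if "0 < a" for a b c
    using eq[OF that, of "- b" c] that unfolding Cminus_def by force
  moreover have "C \<in> {hyperbola a b c | a b c. 0 < a}" if "C \<in> {fabc_circle f1 f2 a b c | a b c. 0 < a}" for C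
    using that eq by blast
  ultimately show ?thesis unfolding Cminus_def by blast
qed

lemma Cplus_reciprocal:
  assumes "\<forall>x>0. f1 x = 1 / x \<and> f2 x = 1 / x"
  shows "Cplus f1 f2 = {hyperbola a b c | a b c. a < 0} \<union> {line_circle s t | s t. 0 < s}"
proof (intro equalityI subsetI)
  fix C assume "C \<in> Cplus f1 f2"
  then consider a b c where "0 < a" "C = refl_x ` hyperbola a b c"
    | s t where "s < 0" "C = refl_x ` line_circle s t"
    unfolding Cplus_def Cminus_reciprocal[OF assms] by blast
  then show "C \<in> {hyperbola a b c | a b c. a < 0} \<union> {line_circle s t | s t. 0 < s}"
  proof cases
    case 1
    then have "C = hyperbola (- a) (- b) c" "- a < 0" by (simp_all add: refl_x_hyperbola)
    then show ?thesis by blast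
  next
    case 2
    then have "C = line_circle (- s) t" "0 < - s" by (simp_all add: refl_x_line_circle)
    then show ?thesis by blast
  qed
next
  fix C assume "C \<in> {hyperbola a b c | a b c. a < 0} \<union> {line_circle s t | s t. 0 < s}"
  then consider a b c where "a < 0" "C = hyperbola a b c" | s t where "0 < s" "C = line_circle s t"
    by blast
  then show "C \<in> Cplus f1 f2"
  proof cases
    case 1
    then have "C = refl_x ` hyperbola (- a) (- b) c" by (simp add: refl_x_hyperbola)
    moreover from 1(1) have "0 < - a" by simp
    then have "hyperbola (- a) (- b) c \<in> Cminus f1 f2" unfolding Cminus_reciprocal[OF assms] by blast
    ultimately show ?thesis unfolding Cplus_def by blast
  next
    case 2
    then have "C = refl_x ` line_circle (- s) t" by (simp add: refl_x_line_circle)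
    moreover from 2(1) have "- s < 0" by simp
    then have "line_circle (- s) t \<in> Cminus f1 f2" unfolding Cminus_reciprocal[OF assms] by blast
    ultimately show ?thesis unfolding Cplus_def by blast
  qed
qed

lemma M_circles_reciprocal:
  assumes "\<forall>x>0. f1 x = 1 / x \<and> f2 x = 1 / x \<and> f3 x = 1 / x \<and> f4 x = 1 / x"
  shows "M_circles f1 f2 f3 f4 = classical_circles"
proof -
  have "{line_circle s t | s t. s \<noteq> 0} = {line_circle s t | s t. s < 0} \<union> {line_circle s t | s t. 0 < s}"
    and "{hyperbola a b c | a b c. a \<noteq> 0} = {hyperbola a b c | a b c. 0 < a} \<union> {hyperbola a b c | a b c. a < 0}"
    by (auto simp: neq_iff)
  with assms show ?thesis
    unfolding M_circles_def classical_circles_eq by (simp add: Cminus_reciprocal Cplus_reciprocal Un_ac)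
qed

theorem theorem5p5:
  fixes f1 f2 f3 f4 :: "real \<Rightarrow> real"
  assumes "strongly_hyperbolic f1" and "strongly_hyperbolic f2"
    and "strongly_hyperbolic f3" and "strongly_hyperbolic f4"
    and "f1 1 = 1" and "f3 1 = 1"
  shows "(\<exists>g. plane_iso g (M_circles f1 f2 f3 f4) classical_circles) \<longleftrightarrow>
         (\<forall>x>0. f1 x = 1 / x \<and> f2 x = 1 / x \<and> f3 x = 1 / x \<and> f4 x = 1 / x)"
proof
  assume "\<exists>g. plane_iso g (M_circles f1 f2 f3 f4) classical_circles"
  then obtain g where iso: "plane_iso g (M_circles f1 f2 f3 f4) classical_circles" by blast
  have "is_mobius (fabc_map f1 f2 1 0 0)" "is_mobius (fabc_map f3 f4 1 0 0 \<circ> ext_neg)"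
    by (rule plane_iso_classical_M_circle_maps_mobius[OF assms(1-4) iso],
        simp add: M_circles_def circle_maps_Un circle_maps_Cplus fabc_map_in_circle_maps)+
  with assms(5,6) show "\<forall>x>0. f1 x = 1 / x \<and> f2 x = 1 / x \<and> f3 x = 1 / x \<and> f4 x = 1 / x"
    by (simp add: fabc_map_mobius_imp_reciprocal is_mobius_comp_ext_neg_iff)
next
  assume "\<forall>x>0. f1 x = 1 / x \<and> f2 x = 1 / x \<and> f3 x = 1 / x \<and> f4 x = 1 / x"
  then have "M_circles f1 f2 f3 f4 = classical_circles" by (rule M_circles_reciprocal)
  then have "plane_iso id (M_circles f1 f2 f3 f4) classical_circles"
    unfolding plane_iso_def by (simp add: bij_betw_def)
  then show "\<exists>g. plane_iso g (M_circles f1 f2 f3 f4) classical_circles" by blast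
qed

end
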